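(* There is a universal constant $C>0$ such that for all $a,b,U,V\in\mathbb{R}$ with $U>1$, $V>0$ and $|a|,|b|<V$, and for $k=0,1$, $$\int_{-U}^U\big|\mathcal{F}\big[(\cdot)^k\mathbf{1}_{[a,b]}\big](u)\big|du\le C\big(U^{2k-1}V^{k+1}+(1-k)\log U\big).$$
   Context: $\mathcal{F}f(u)=\int e^{iux}f(x)dx$; $(\cdot)^k\mathbf{1}_{[a,b]}$ is the function $x\mapsto x^k\mathbf{1}_{[a,b]}(x)$. *)

theory Defs
  imports "HOL-Analysis.Analysis"
begin

definition fourier :: "(real \<Rightarrow> complex) \<Rightarrow> real \<Rightarrow> complex" where
  "fourier f u = (LINT x|lborel. exp (\<i> * complex_of_real (u * x)) * f x)"

definition mon_ind :: "nat \<Rightarrow> real \<Rightarrow> real \<Rightarrow> real \<Rightarrow> complex" where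
  "mon_ind k a b x = complex_of_real (x ^ k * indicator {a..b} x)"

end

theory Submission
  imports Defs
begin

text \<open>For \<open>[a,b] \<subseteq> [-V,V]\<close> the transform of \<open>x^k 1_[a,b]\<close> is trivially bounded by \<open>2 V^(k+1)\<close>;
  for \<open>k = 1\<close> integrating this over \<open>[-U,U]\<close> already gives \<open>4 U V^2\<close>. For \<open>k = 0\<close> the transform
  is also \<open>(e^(iub) - e^(iua)) / (iu)\<close>, of modulus at most \<open>2/|u|\<close>, so it is dominated by
  \<open>4V / (1 + V|u|)\<close>, whose integral over \<open>[-U,U]\<close> is \<open>8 ln (1 + UV) \<le> 16 ln U + 8 V/U\<close>.\<close>

lemma fourier_mon_ind_eq_integral:
  assumes "a \<le> b"
  shows "fourier (mon_ind k a b) u = integral {a..b} (\<lambda>x. exp (\<i> * complex_of_real (u * x)) * complex_of_real (x ^ k))"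
    (is "_ = integral _ ?f")
proof -
  have cont: "continuous_on {a..b} ?f"
    by (intro continuous_intros)
  have "fourier (mon_ind k a b) u = (LINT x|lborel. indicator {a..b} x *\<^sub>R ?f x)"
    unfolding fourier_def mon_ind_def
    by (intro Bochner_Integration.integral_cong) (auto simp: indicator_def scaleR_conv_of_real)
  also have "\<dots> = integral {a..b} ?f"
    using set_borel_integral_eq_integral(2)[of "{a..b}" ?f] borel_integrable_compact[OF compact_Icc cont]
    by (simp add: set_integrable_def set_lebesgue_integral_def)
  finally show ?thesis .
qed

lemma fourier_mon_ind_empty:
  assumes "b < a"
  shows "fourier (mon_ind k a b) u = 0"
  using assms unfolding fourier_def mon_ind_def by (simp add: indicator_def)

lemma norm_fourier_mon_ind_le:
  assumes "\<bar>a\<bar> \<le> V" "\<bar>b\<bar> \<le> V"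
  shows "cmod (fourier (mon_ind k a b) u) \<le> 2 * V ^ (k + 1)"
proof (cases "a \<le> b")
  case True
  have "cmod (integral {a..b} (\<lambda>x. exp (\<i> * complex_of_real (u * x)) * complex_of_real (x ^ k)))
      \<le> V ^ k * (b - a)"
  proof (rule integral_bound[OF True])
    show "continuous_on {a..b} (\<lambda>x. exp (\<i> * complex_of_real (u * x)) * complex_of_real (x ^ k))"
      by (intro continuous_intros)
  next
    fix x assume "x \<in> {a..b}"
    then have "\<bar>x\<bar> ^ k \<le> V ^ k"
      using assms by (intro power_mono) auto
    then show "cmod (exp (\<i> * complex_of_real (u * x)) * complex_of_real (x ^ k)) \<le> V ^ k"
      by (simp add: norm_mult norm_power)
  qed
  also have "\<dots> \<le> V ^ k * (2 * V)"
    using assms by (intro mult_left_mono) auto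
  finally show ?thesis
    by (simp add: fourier_mon_ind_eq_integral[OF True] algebra_simps)
next
  case False
  then show ?thesis
    using assms by (simp add: fourier_mon_ind_empty)
qed

lemma norm_fourier_indicator_le:
  assumes "u \<noteq> 0"
  shows "cmod (fourier (mon_ind 0 a b) u) \<le> 2 / \<bar>u\<bar>"
proof (cases "a \<le> b")
  case True
  define G where "G x = exp (\<i> * complex_of_real (u * x)) / (\<i> * complex_of_real u)" for x
  have "((\<lambda>x. exp (\<i> * complex_of_real (u * x)) * complex_of_real (x ^ 0)) has_integral (G b - G a)) {a..b}"
  proof (rule fundamental_theorem_of_calculus[OF True])
    fix x assume "x \<in> {a..b}"
    have "((\<lambda>z. exp (\<i> * complex_of_real u * z) / (\<i> * complex_of_real u)) has_field_derivative
        exp (\<i> * complex_of_real u * complex_of_real x)) (at (complex_of_real x))"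
      using assms by (auto intro!: derivative_eq_intros simp: field_simps)
    from has_vector_derivative_real_field[OF this]
    show "(G has_vector_derivative exp (\<i> * complex_of_real (u * x)) * complex_of_real (x ^ 0))
        (at x within {a..b})"
      unfolding G_def by (simp add: mult.assoc)
  qed
  then have "fourier (mon_ind 0 a b) u = G b - G a"
    by (simp add: fourier_mon_ind_eq_integral[OF True] integral_unique)
  moreover have "cmod (G x) = 1 / \<bar>u\<bar>" for x
    unfolding G_def using assms by (simp add: norm_divide norm_mult)
  ultimately show ?thesis
    using norm_triangle_ineq4[of "G b" "G a"] by simp
next
  case False
  then show ?thesis
    by (simp add: fourier_mon_ind_empty)
qed

lemma norm_fourier_indicator_le_decay:
  assumes "\<bar>a\<bar> \<le> V" "\<bar>b\<bar> \<le> V" "V > 0"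
  shows "cmod (fourier (mon_ind 0 a b) u) \<le> 4 * V / (1 + V * \<bar>u\<bar>)"
proof -
  have pos: "1 + V * \<bar>u\<bar> > 0"
    using assms by (simp add: add_pos_nonneg)
  show ?thesis
  proof (cases "V * \<bar>u\<bar> \<le> 1")
    case True
    then have "2 * V \<le> 4 * V / (1 + V * \<bar>u\<bar>)"
      using pos assms by (simp add: field_simps)
    then show ?thesis
      using norm_fourier_mon_ind_le[OF assms(1,2), of 0 u] by simp
  next
    case False
    then have u: "u \<noteq> 0" by auto
    have "2 / \<bar>u\<bar> \<le> 4 * V / (1 + V * \<bar>u\<bar>)"
      using pos False assms u by (simp add: field_simps)
    then show ?thesis
      using norm_fourier_indicator_le[OF u, of a b] by linarith
  qed
qed

text \<open>No integrability of \<open>f\<close> is needed: a non-integrable \<open>f\<close> has Lebesgue integral \<open>0 \<le> I\<close>.\<close>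
lemma interval_lebesgue_integral_le_has_integral:
  fixes f g :: "real \<Rightarrow> real" and U :: real
  assumes "U \<ge> 0" and le: "\<And>u. u \<in> {-U..U} \<Longrightarrow> f u \<le> g u"
    and g: "(g has_integral I) {-U..U}" and "I \<ge> 0"
  shows "(LBINT u=-U..U. f u) \<le> I"
proof -
  have eq: "(LBINT u=-U..U. f u) = (LBINT u:{-U..U}. f u)"
    using assms(1) by (intro interval_integral_Icc) simp
  show ?thesis
  proof (cases "set_integrable lborel {-U..U} f")
    case True
    have "(LBINT u:{-U..U}. f u) = integral {-U..U} f"
      using set_borel_integral_eq_integral(2)[OF True] .
    also have "\<dots> \<le> integral {-U..U} g"
      using set_borel_integral_eq_integral(1)[OF True] g le by (intro integral_le) auto
    also have "\<dots> = I"
      using g by (rule integral_unique)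
    finally show ?thesis
      using eq by simp
  next
    case False
    then have "(LBINT u:{-U..U}. f u) = 0"
      unfolding set_integrable_def set_lebesgue_integral_def by (rule not_integrable_integral_eq)
    then show ?thesis
      using eq assms(4) by simp
  qed
qed

lemma has_integral_inverse_one_plus_abs:
  fixes U V :: real
  assumes "U \<ge> 0" "V \<ge> 0"
  shows "((\<lambda>u. V / (1 + V * \<bar>u\<bar>)) has_integral 2 * ln (1 + U * V)) {-U..U}"
proof -
  have right: "((\<lambda>u. V / (1 + V * \<bar>u\<bar>)) has_integral (ln (1 + V * U) - ln (1 + V * 0))) {0..U}"
  proof (rule fundamental_theorem_of_calculus)
    fix x assume x: "x \<in> {0..U}"
    then have "1 + V * x > 0"
      using assms by (simp add: add_pos_nonneg)
    then show "((\<lambda>u. ln (1 + V * u)) has_vector_derivative V / (1 + V * \<bar>x\<bar>)) (at x within {0..U})"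
      unfolding has_real_derivative_iff_has_vector_derivative[symmetric]
      using x by (auto intro!: derivative_eq_intros)
  qed (use assms in simp)
  have left: "((\<lambda>u. V / (1 + V * \<bar>u\<bar>)) has_integral (- ln (1 - V * 0) - - ln (1 - V * (-U)))) {-U..0}"
  proof (rule fundamental_theorem_of_calculus)
    fix x assume x: "x \<in> {-U..0}"
    then have "V * x \<le> 0"
      using assms by (simp add: mult_nonneg_nonpos)
    then have "1 - V * x > 0" by linarith
    then show "((\<lambda>u. - ln (1 - V * u)) has_vector_derivative V / (1 + V * \<bar>x\<bar>)) (at x within {-U..0})"
      unfolding has_real_derivative_iff_has_vector_derivative[symmetric]
      using x by (auto intro!: derivative_eq_intros simp: field_simps)
  qed (use assms in simp)
  show ?thesis
    using has_integral_combine[of "-U" 0 U, OF _ _ left right] assms by (simp add: mult.commute)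
qed

text \<open>From \<open>1 + UV \<le> U\<^sup>2(1 + V/U)\<close> and \<open>ln(1 + t) \<le> t\<close>.\<close>
lemma ln_one_plus_mult_le:
  fixes U V :: real
  assumes "U \<ge> 1" "V \<ge> 0"
  shows "ln (1 + U * V) \<le> 2 * ln U + V / U"
proof -
  have pos: "1 + V / U > 0"
    using assms by (simp add: add_pos_nonneg)
  have "1 + U * V \<le> U * (U * (1 + V / U))"
    using assms mult_mono[of 1 U 1 U] by (simp add: field_simps)
  then have "ln (1 + U * V) \<le> ln (U * (U * (1 + V / U)))"
    using assms by (intro ln_mono) (auto simp: add_pos_nonneg)
  also have "\<dots> = 2 * ln U + ln (1 + V / U)"
    using assms pos by (simp add: ln_mult)
  also have "ln (1 + V / U) \<le> V / U"
    using assms by (intro ln_add_one_self_le_self) simp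
  finally show ?thesis by simp
qed

lemma integral_norm_fourier_indicator_le:
  fixes U V :: real
  assumes "U > 1" "V > 0" "\<bar>a\<bar> \<le> V" "\<bar>b\<bar> \<le> V"
  shows "(LBINT u=-U..U. cmod (fourier (mon_ind 0 a b) u)) \<le> 16 * (V / U + ln U)"
proof -
  have "((\<lambda>u. 4 * (V / (1 + V * \<bar>u\<bar>))) has_integral 4 * (2 * ln (1 + U * V))) {-U..U}"
    using assms by (intro has_integral_mult_right has_integral_inverse_one_plus_abs) auto
  then have "(LBINT u=-U..U. cmod (fourier (mon_ind 0 a b) u)) \<le> 4 * (2 * ln (1 + U * V))"
    using assms norm_fourier_indicator_le_decay[OF assms(3,4,2)]
    by (intro interval_lebesgue_integral_le_has_integral) auto
  also have "\<dots> \<le> 16 * (V / U + ln U)"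
    using ln_one_plus_mult_le[of U V] assms by (simp add: field_simps)
  finally show ?thesis .
qed

lemma integral_norm_fourier_mon_ind_le:
  fixes U V :: real
  assumes "U \<ge> 0" "\<bar>a\<bar> \<le> V" "\<bar>b\<bar> \<le> V"
  shows "(LBINT u=-U..U. cmod (fourier (mon_ind k a b) u)) \<le> 4 * U * V ^ (k + 1)"
proof (rule interval_lebesgue_integral_le_has_integral)
  show "((\<lambda>_. 2 * V ^ (k + 1)) has_integral 4 * U * V ^ (k + 1)) {-U..U}"
    using has_integral_const_real[of "2 * V ^ (k + 1)" "-U" U] assms(1) by (simp add: algebra_simps)
  have "V \<ge> 0"
    using assms by linarith
  then show "0 \<le> 4 * U * V ^ (k + 1)"
    using assms(1) by simp
qed (use assms norm_fourier_mon_ind_le in auto)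

lemma integral_norm_fourier_mon_ind_le_powr:
  fixes U V :: real
  assumes U: "U > 1" and V: "V > 0" and ab: "\<bar>a\<bar> \<le> V" "\<bar>b\<bar> \<le> V" and "k \<le> 1"
  shows "(LBINT u=-U..U. cmod (fourier (mon_ind k a b) u))
    \<le> 16 * (U powr (2 * real k - 1) * V ^ (k + 1) + (1 - real k) * ln U)"
proof -
  consider "k = 0" | "k = 1"
    using \<open>k \<le> 1\<close> by linarith
  then show ?thesis
  proof cases
    case 1
    then show ?thesis
      using integral_norm_fourier_indicator_le[OF U V ab] U by (simp add: powr_minus_divide)
  next
    case 2
    have "(LBINT u=-U..U. cmod (fourier (mon_ind 1 a b) u)) \<le> 4 * U * V ^ 2"
      using integral_norm_fourier_mon_ind_le[of U a V b 1] U ab by (simp add: power2_eq_square)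
    also have "\<dots> \<le> 16 * (U * V ^ 2)"
      using U by simp
    finally show ?thesis
      using 2 U by (simp add: power2_eq_square)
  qed
qed

theorem lemma3p6:
  shows "\<exists>C>0. \<forall>a b U V :: real. \<forall>k :: nat.
     U > 1 \<longrightarrow> V > 0 \<longrightarrow> \<bar>a\<bar> < V \<longrightarrow> \<bar>b\<bar> < V \<longrightarrow> k \<le> 1 \<longrightarrow>
     (LBINT u=-U..U. cmod (fourier (mon_ind k a b) u))
       \<le> C * (U powr (2 * real k - 1) * V ^ (k + 1) + (1 - real k) * ln U)"
  using integral_norm_fourier_mon_ind_le_powr
  by (intro exI[of _ 16]) (simp add: less_imp_le)

end
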